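(* Let $X,\hat X$ be real matrices of the same size with singular value decompositions $X=U\Sigma V^T$ and $\hat X=\hat U\hat\Sigma\hat V^T$ (with $U,V,\hat U,\hat V$ having orthonormal columns and $\Sigma,\hat\Sigma$ square nonnegative diagonal). Assume $\|X\|<1$, $\|\hat X\|<1$ and $\|X\|^2+2\|\hat X-X\|<1$. Then $$\big\|U\Sigma(I-\Sigma^2)^{-1}V^T-\hat U\hat\Sigma(I-\hat\Sigma^2)^{-1}\hat V^T\big\|\le\frac{3\|X-\hat X\|}{(1-\|X\|^2-2\|\hat X-X\|)^2}.$$
   Context: $\|\cdot\|$ denotes the spectral norm. *)

theory Defs
  imports "HOL-Analysis.Analysis"
begin

definition spec_norm :: "real^'n^'m \<Rightarrow> real" where
  "spec_norm A = onorm (\<lambda>x. A *v x)"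

definition orth_cols :: "real^'k^'m \<Rightarrow> bool" where
  "orth_cols U \<longleftrightarrow> transpose U ** U = mat 1"

definition nonneg_diag :: "real^'k^'k \<Rightarrow> bool" where
  "nonneg_diag S \<longleftrightarrow> (\<forall>i j. i \<noteq> j \<longrightarrow> S $ i $ j = 0) \<and> (\<forall>i. S $ i $ i \<ge> 0)"

end

theory Submission
  imports Defs
begin

text \<open>
  For a thin SVD \<open>X = U \<Sigma> V\<^sup>T\<close> one has
  \<open>U \<Sigma> (I - \<Sigma>\<^sup>2)\<^sup>-\<^sup>1 V\<^sup>T = X (I - X\<^sup>T X)\<^sup>-\<^sup>1\<close>,
  so the left-hand side does not depend on the chosen decompositions.
  With \<open>A = (I - X\<^sup>T X)\<^sup>-\<^sup>1\<close> and \<open>B = (I - \<hat>X\<^sup>T \<hat>X)\<^sup>-\<^sup>1\<close>,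
  the resolvent identity \<open>A - B = A (X\<^sup>T X - \<hat>X\<^sup>T \<hat>X) B\<close> gives
  \<open>X A - \<hat>X B = (X - \<hat>X) A + \<hat>X A (X\<^sup>T X - \<hat>X\<^sup>T \<hat>X) B\<close>.
  Since \<open>\<parallel>X\<^sup>T X - \<hat>X\<^sup>T \<hat>X\<parallel> \<le> 2 \<parallel>X - \<hat>X\<parallel>\<close>, both Gram matrices have norm
  at most \<open>\<parallel>X\<parallel>\<^sup>2 + 2 \<parallel>\<hat>X - X\<parallel> = 1 - d\<close>, so the Neumann series gives
  \<open>\<parallel>A\<parallel>, \<parallel>B\<parallel> \<le> 1/d\<close>, and the difference is at most
  \<open>\<epsilon>/d + 2\<epsilon>/d\<^sup>2 \<le> 3\<epsilon>/d\<^sup>2\<close> with \<open>\<epsilon> = \<parallel>X - \<hat>X\<parallel>\<close>.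
\<close>

lemma matrix_diff_ldistrib: "(A::'a::ring_1^'n^'m) ** (B - C) = A ** B - A ** C"
  by (vector matrix_matrix_mult_def sum_subtractf right_diff_distrib)

lemma matrix_diff_rdistrib: "((A::'a::ring_1^'n^'m) - B) ** C = A ** C - B ** C"
  by (vector matrix_matrix_mult_def sum_subtractf left_diff_distrib)

lemma transpose_diff: "transpose ((A::'a::ab_group_add^'n^'m) - B) = transpose A - transpose B"
  by (simp add: vec_eq_iff transpose_def)

lemma matrix_inv_right: "invertible A \<Longrightarrow> A ** matrix_inv A = mat 1"
  unfolding invertible_def matrix_inv_def by (rule someI2_ex) auto

lemma matrix_inv_left: "invertible A \<Longrightarrow> matrix_inv A ** A = mat 1"
  unfolding invertible_def matrix_inv_def by (rule someI2_ex) auto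

lemma matrix_inv_diff:
  fixes A B :: "'a::ring_1^'n^'m"
  assumes "invertible A" "invertible B"
  shows "matrix_inv A - matrix_inv B = matrix_inv A ** (B - A) ** matrix_inv B"
  by (simp add: matrix_diff_ldistrib matrix_diff_rdistrib matrix_mul_assoc[symmetric]
      matrix_inv_right[OF assms(2)]) (simp add: matrix_mul_assoc matrix_inv_left[OF assms(1)])

lemma spec_norm_bound: "norm (A *v x) \<le> spec_norm A * norm x"
  unfolding spec_norm_def by (rule onorm) simp

lemma spec_norm_le: "(\<And>x. norm (A *v x) \<le> b * norm x) \<Longrightarrow> spec_norm A \<le> b"
  unfolding spec_norm_def by (rule onorm_le)

lemma spec_norm_nonneg: "0 \<le> spec_norm A"
  unfolding spec_norm_def by (rule onorm_pos_le) simp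

lemma spec_norm_mult: "spec_norm ((A::real^'n^'m) ** (B::real^'k^'n)) \<le> spec_norm A * spec_norm B"
proof -
  have "(\<lambda>x. (A ** B) *v x) = (\<lambda>x. A *v x) \<circ> (\<lambda>x. B *v x)"
    by (simp add: o_def matrix_vector_mul_assoc)
  then show ?thesis unfolding spec_norm_def by (simp add: onorm_compose)
qed

lemma spec_norm_mult3:
  "spec_norm ((A::real^'n^'m) ** (B::real^'k^'n) ** (C::real^'l^'k))
    \<le> spec_norm A * spec_norm B * spec_norm C"
  by (intro order_trans[OF spec_norm_mult] mult_right_mono spec_norm_mult spec_norm_nonneg)

lemma spec_norm_add: "spec_norm ((A::real^'n^'m) + B) \<le> spec_norm A + spec_norm B"
  unfolding spec_norm_def matrix_vector_mult_add_rdistrib by (rule onorm_triangle) simp_all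

lemma spec_norm_uminus: "spec_norm (- (A::real^'n^'m)) = spec_norm A"
proof -
  have "(*v) (- A) = (\<lambda>x. - (A *v x))"
    using matrix_vector_mult_diff_rdistrib[of 0 A] by auto
  then show ?thesis unfolding spec_norm_def using onorm_neg[of "(*v) A"] by simp
qed

lemma spec_norm_diff: "spec_norm ((A::real^'n^'m) - B) \<le> spec_norm A + spec_norm B"
  using spec_norm_add[of A "- B"] by (simp add: spec_norm_uminus)

lemma spec_norm_minus_commute: "spec_norm ((A::real^'n^'m) - B) = spec_norm (B - A)"
  using spec_norm_uminus[of "B - A"] by simp

lemma spec_norm_transpose_le: "spec_norm (transpose (A::real^'n^'m)) \<le> spec_norm A"
proof (rule spec_norm_le)
  fix y :: "real^'m"
  define z where "z = transpose A *v y"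
  have "(norm z)\<^sup>2 = inner y (A *v z)"
    by (metis z_def power2_norm_eq_inner dot_lmul_matrix transpose_matrix_vector)
  also have "\<dots> \<le> norm y * norm (A *v z)" by (rule norm_cauchy_schwarz)
  also have "\<dots> \<le> norm y * (spec_norm A * norm z)"
    by (rule mult_left_mono[OF spec_norm_bound norm_ge_zero])
  finally have "norm z * norm z \<le> (spec_norm A * norm y) * norm z"
    by (simp add: power2_eq_square algebra_simps)
  then show "norm z \<le> spec_norm A * norm y"
    using spec_norm_nonneg[of A] by (cases "z = 0") auto
qed

lemma spec_norm_transpose: "spec_norm (transpose (A::real^'n^'m)) = spec_norm A"
  using spec_norm_transpose_le[of A] spec_norm_transpose_le[of "transpose A"] by simp

lemma spec_norm_gram: "spec_norm (transpose (A::real^'n^'m) ** A) \<le> (spec_norm A)\<^sup>2"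
  using spec_norm_mult[of "transpose A" A] by (simp add: spec_norm_transpose power2_eq_square)

lemma spec_norm_gram_less_1:
  assumes "spec_norm (A::real^'n^'m) < 1"
  shows "spec_norm (transpose A ** A) < 1"
proof -
  have "(spec_norm A)\<^sup>2 < 1"
    using power_strict_mono[OF assms spec_norm_nonneg, of 2] by simp
  then show ?thesis using spec_norm_gram[of A] by simp
qed

lemma spec_norm_gram_diff:
  fixes X Y :: "real^'n^'m"
  shows "spec_norm (transpose X ** X - transpose Y ** Y)
         \<le> (spec_norm X + spec_norm Y) * spec_norm (X - Y)"
proof -
  have "transpose X ** X - transpose Y ** Y = transpose X ** (X - Y) + transpose (X - Y) ** Y"
    by (simp add: transpose_diff matrix_diff_ldistrib matrix_diff_rdistrib)
  then have "spec_norm (transpose X ** X - transpose Y ** Y)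
      \<le> spec_norm (transpose X) * spec_norm (X - Y) + spec_norm (transpose (X - Y)) * spec_norm Y"
    by (simp only:) (intro order_trans[OF spec_norm_add] add_mono spec_norm_mult)
  then show ?thesis by (simp add: spec_norm_transpose algebra_simps)
qed

lemma spec_norm_orth_cols: "orth_cols (U::real^'k^'m) \<Longrightarrow> spec_norm U \<le> 1"
proof (rule spec_norm_le)
  fix x :: "real^'k"
  assume "orth_cols U"
  then have "(norm (U *v x))\<^sup>2 = (norm x)\<^sup>2"
    unfolding orth_cols_def power2_norm_eq_inner
    by (metis dot_lmul_matrix transpose_matrix_vector matrix_vector_mul_assoc
        matrix_vector_mul_lid)
  then show "norm (U *v x) \<le> 1 * norm x" by simp
qed

lemma norm_one_minus_mult_ge:
  "(1 - spec_norm M) * norm x \<le> norm ((mat 1 - (M::real^'n^'n)) *v x)"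
proof -
  have "norm x - norm (M *v x) \<le> norm ((mat 1 - M) *v x)"
    by (simp add: matrix_vector_mult_diff_rdistrib norm_triangle_ineq2)
  then show ?thesis using spec_norm_bound[of M x] by (simp add: algebra_simps)
qed

lemma invertible_one_minus:
  assumes "spec_norm (M::real^'n^'n) < 1"
  shows "invertible (mat 1 - M)"
proof -
  have "x = 0" if "(mat 1 - M) *v x = 0" for x
    using norm_one_minus_mult_ge[of M x] that assms by (simp add: mult_le_0_iff)
  then show ?thesis
    using matrix_left_invertible_ker invertible_left_inverse by blast
qed

lemma spec_norm_matrix_inv_one_minus:
  assumes "spec_norm (M::real^'n^'n) < 1"
  shows "spec_norm (matrix_inv (mat 1 - M)) \<le> 1 / (1 - spec_norm M)"
proof (rule spec_norm_le)
  fix y :: "real^'n"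
  have "(mat 1 - M) *v (matrix_inv (mat 1 - M) *v y) = y"
    by (simp add: matrix_vector_mul_assoc matrix_inv_right[OF invertible_one_minus[OF assms]])
  then have "(1 - spec_norm M) * norm (matrix_inv (mat 1 - M) *v y) \<le> norm y"
    by (metis norm_one_minus_mult_ge)
  then show "norm (matrix_inv (mat 1 - M) *v y) \<le> 1 / (1 - spec_norm M) * norm y"
    using assms by (simp add: field_simps)
qed

lemma spec_norm_matrix_inv_one_minus_le:
  assumes "spec_norm (M::real^'n^'n) \<le> 1 - d" "0 < d"
  shows "spec_norm (matrix_inv (mat 1 - M)) \<le> 1 / d"
proof -
  have "spec_norm (matrix_inv (mat 1 - M)) \<le> 1 / (1 - spec_norm M)"
    using assms by (intro spec_norm_matrix_inv_one_minus) simp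
  also have "\<dots> \<le> 1 / d"
    using assms by (intro divide_left_mono) auto
  finally show ?thesis .
qed

lemma nonneg_diag_transpose: "nonneg_diag S \<Longrightarrow> transpose S = S"
  unfolding nonneg_diag_def transpose_def by (simp add: vec_eq_iff) metis

lemma spec_norm_orth_cols_factor:
  assumes "orth_cols U" "orth_cols V"
  shows "spec_norm S \<le> spec_norm (U ** S ** transpose V)"
proof -
  have "transpose U ** (U ** S ** transpose V) ** V = (transpose U ** U) ** S ** (transpose V ** V)"
    by (simp add: matrix_mul_assoc)
  then have "S = transpose U ** (U ** S ** transpose V) ** V"
    using assms unfolding orth_cols_def by simp
  also have "spec_norm \<dots> \<le> spec_norm (transpose U) * spec_norm (U ** S ** transpose V) * spec_norm V"
    by (rule spec_norm_mult3)
  also have "\<dots> \<le> 1 * spec_norm (U ** S ** transpose V) * 1"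
    using assms by (intro mult_mono) (auto simp: spec_norm_transpose spec_norm_orth_cols spec_norm_nonneg)
  finally show ?thesis by simp
qed

lemma svd_matrix_inv_eq_invertible:
  assumes U: "orth_cols U" and V: "orth_cols V" and S: "transpose S = S"
    and X: "X = U ** S ** transpose V"
    and inv_S: "invertible (mat 1 - S ** S)" and inv_X: "invertible (mat 1 - transpose X ** X)"
  shows "U ** S ** matrix_inv (mat 1 - S ** S) ** transpose V
         = X ** matrix_inv (mat 1 - transpose X ** X)"
proof -
  define C where "C = matrix_inv (mat 1 - S ** S)"
  have "transpose V ** (transpose X ** X)
      = (transpose V ** V) ** transpose S ** (transpose U ** U) ** S ** transpose V"
    unfolding X by (simp add: matrix_transpose_mul matrix_mul_assoc)
  then have VXX: "transpose V ** (transpose X ** X) = S ** S ** transpose V"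
    using U V S unfolding orth_cols_def by simp
  have "U ** S ** C ** transpose V ** (mat 1 - transpose X ** X)
      = U ** S ** C ** (transpose V - transpose V ** (transpose X ** X))"
    by (simp add: matrix_diff_ldistrib matrix_mul_assoc)
  also have "\<dots> = U ** S ** (C ** (mat 1 - S ** S)) ** transpose V"
    unfolding VXX by (simp add: matrix_diff_ldistrib matrix_diff_rdistrib matrix_mul_assoc)
  also have "\<dots> = X"
    unfolding C_def matrix_inv_left[OF inv_S] X by simp
  finally have "X ** matrix_inv (mat 1 - transpose X ** X)
      = U ** S ** C ** transpose V
        ** ((mat 1 - transpose X ** X) ** matrix_inv (mat 1 - transpose X ** X))"
    by (simp add: matrix_mul_assoc)
  then show ?thesis unfolding matrix_inv_right[OF inv_X] C_def by simp
qed

lemma svd_matrix_inv_eq: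
  fixes X :: "real^'n^'m"
  assumes "orth_cols U" "orth_cols V" "nonneg_diag S" "X = U ** S ** transpose V"
    and "spec_norm X < 1"
  shows "U ** S ** matrix_inv (mat 1 - S ** S) ** transpose V
         = X ** matrix_inv (mat 1 - transpose X ** X)"
proof (rule svd_matrix_inv_eq_invertible[OF assms(1,2) nonneg_diag_transpose[OF assms(3)] assms(4)])
  have "spec_norm S < 1"
    using spec_norm_orth_cols_factor[OF assms(1,2), of S] assms(4,5) by simp
  then show "invertible (mat 1 - S ** S)"
    using invertible_one_minus[OF spec_norm_gram_less_1] nonneg_diag_transpose[OF assms(3)] by metis
  show "invertible (mat 1 - transpose X ** X)"
    by (rule invertible_one_minus[OF spec_norm_gram_less_1[OF assms(5)]])
qed

lemma gram_resolvent_diff_eq: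
  fixes X Y :: "'a::ring_1^'n^'m"
  defines "A \<equiv> matrix_inv (mat 1 - transpose X ** X)"
    and "B \<equiv> matrix_inv (mat 1 - transpose Y ** Y)"
  assumes "invertible (mat 1 - transpose X ** X)" "invertible (mat 1 - transpose Y ** Y)"
  shows "X ** A - Y ** B = (X - Y) ** A + Y ** (A ** (transpose X ** X - transpose Y ** Y) ** B)"
proof -
  have "X ** A - Y ** B = (X - Y) ** A + Y ** (A - B)"
    by (simp add: matrix_diff_ldistrib matrix_diff_rdistrib)
  also have "A - B = A ** (transpose X ** X - transpose Y ** Y) ** B"
    using matrix_inv_diff[OF assms(3,4)] by (simp add: A_def B_def)
  finally show ?thesis .
qed

lemma spec_norm_perturbation_less_1:
  fixes X Y :: "real^'n^'m"
  assumes "(spec_norm X)\<^sup>2 + 2 * spec_norm (Y - X) < 1"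
  shows "spec_norm X < 1" "spec_norm Y < 1"
proof -
  have "(spec_norm X)\<^sup>2 < 1\<^sup>2"
    using assms spec_norm_nonneg[of "Y - X"] by simp
  then show "spec_norm X < 1" by (rule power2_less_imp_less) simp
  have "2 * spec_norm X \<le> 1 + (spec_norm X)\<^sup>2"
    using zero_le_power2[of "spec_norm X - 1"] by (simp add: power2_diff)
  moreover have "spec_norm Y \<le> spec_norm X + spec_norm (Y - X)"
    using spec_norm_add[of X "Y - X"] by simp
  ultimately show "spec_norm Y < 1" using assms by linarith
qed

lemma spec_norm_gram_resolvent_diff_le:
  fixes X Y :: "real^'n^'m"
  defines "A \<equiv> matrix_inv (mat 1 - transpose X ** X)"
    and "B \<equiv> matrix_inv (mat 1 - transpose Y ** Y)"
  assumes gram_X: "spec_norm (transpose X ** X) \<le> 1 - d"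
    and gram_Y: "spec_norm (transpose Y ** Y) \<le> 1 - d"
    and d: "0 < d" and norm_Y: "spec_norm Y \<le> 1"
  shows "spec_norm (X ** A - Y ** B)
         \<le> spec_norm (X - Y) / d + spec_norm (transpose X ** X - transpose Y ** Y) / d\<^sup>2"
proof -
  let ?\<Delta> = "transpose X ** X - transpose Y ** Y"
  have norm_A: "spec_norm A \<le> 1 / d"
    unfolding A_def using gram_X d by (rule spec_norm_matrix_inv_one_minus_le)
  have norm_B: "spec_norm B \<le> 1 / d"
    unfolding B_def using gram_Y d by (rule spec_norm_matrix_inv_one_minus_le)
  have "spec_norm (A ** ?\<Delta> ** B) \<le> spec_norm A * spec_norm ?\<Delta> * spec_norm B"
    by (rule spec_norm_mult3)
  also have "\<dots> \<le> 1 / d * spec_norm ?\<Delta> * (1 / d)"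
    using norm_A norm_B d by (intro mult_mono) (auto simp: spec_norm_nonneg)
  finally have middle: "spec_norm (A ** ?\<Delta> ** B) \<le> 1 / d * spec_norm ?\<Delta> * (1 / d)" .
  have first: "spec_norm ((X - Y) ** A) \<le> spec_norm (X - Y) * (1 / d)"
    using norm_A by (intro order_trans[OF spec_norm_mult] mult_left_mono spec_norm_nonneg)
  have second: "spec_norm (Y ** (A ** ?\<Delta> ** B)) \<le> 1 * (1 / d * spec_norm ?\<Delta> * (1 / d))"
    by (rule order_trans[OF spec_norm_mult mult_mono[OF norm_Y middle]]) (simp_all add: spec_norm_nonneg)
  have "invertible (mat 1 - transpose X ** X)" "invertible (mat 1 - transpose Y ** Y)"
    using gram_X gram_Y d by (auto intro: invertible_one_minus)
  then have "X ** A - Y ** B = (X - Y) ** A + Y ** (A ** ?\<Delta> ** B)"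
    unfolding A_def B_def by (rule gram_resolvent_diff_eq)
  then show ?thesis
    using order_trans[OF spec_norm_add add_mono[OF first second]] by (simp add: power2_eq_square)
qed

lemma spec_norm_gram_resolvent_diff:
  fixes X Y :: "real^'n^'m"
  assumes "(spec_norm X)\<^sup>2 + 2 * spec_norm (Y - X) < 1"
  shows "spec_norm (X ** matrix_inv (mat 1 - transpose X ** X)
                    - Y ** matrix_inv (mat 1 - transpose Y ** Y))
         \<le> 3 * spec_norm (X - Y) / (1 - (spec_norm X)\<^sup>2 - 2 * spec_norm (Y - X))\<^sup>2"
proof -
  define e where "e = spec_norm (X - Y)"
  define d where "d = 1 - (spec_norm X)\<^sup>2 - 2 * e"
  have e_sym: "spec_norm (Y - X) = e" unfolding e_def by (rule spec_norm_minus_commute)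
  have e: "0 \<le> e" unfolding e_def by (rule spec_norm_nonneg)
  have d: "0 < d" "d \<le> 1"
    using assms e zero_le_power2[of "spec_norm X"] unfolding d_def e_sym by linarith+
  have norm_X: "spec_norm X \<le> 1" and norm_Y: "spec_norm Y \<le> 1"
    using spec_norm_perturbation_less_1[OF assms] by simp_all
  have "(spec_norm X + spec_norm Y) * e \<le> 2 * e"
    using norm_X norm_Y e by (intro mult_right_mono) auto
  then have gram_diff: "spec_norm (transpose X ** X - transpose Y ** Y) \<le> 2 * e"
    using spec_norm_gram_diff[of X Y, folded e_def] by linarith
  have gram_X: "spec_norm (transpose X ** X) \<le> 1 - d"
    using spec_norm_gram[of X] e unfolding d_def by simp
  have "spec_norm (transpose Y ** Y)
      \<le> spec_norm (transpose X ** X) + spec_norm (transpose X ** X - transpose Y ** Y)"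
    using spec_norm_diff[of "transpose X ** X" "transpose X ** X - transpose Y ** Y"] by simp
  then have gram_Y: "spec_norm (transpose Y ** Y) \<le> 1 - d"
    using spec_norm_gram[of X] gram_diff unfolding d_def by simp
  have "spec_norm (X ** matrix_inv (mat 1 - transpose X ** X)
                  - Y ** matrix_inv (mat 1 - transpose Y ** Y))
      \<le> e / d + spec_norm (transpose X ** X - transpose Y ** Y) / d\<^sup>2"
    using spec_norm_gram_resolvent_diff_le[OF gram_X gram_Y d(1) norm_Y] unfolding e_def .
  also have "\<dots> \<le> e / d\<^sup>2 + 2 * e / d\<^sup>2"
    using d e gram_diff mult_right_mono[of d 1 e]
    by (intro add_mono divide_right_mono) (simp_all add: field_simps power2_eq_square)
  finally show ?thesis unfolding d_def e_def e_sym by (simp add: add_divide_distrib[symmetric])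
qed

theorem lemma5:
  fixes X Xh :: "real^'n^'m"
    and U :: "real^'k^'m" and S :: "real^'k^'k" and V :: "real^'k^'n"
    and Uh :: "real^'l^'m" and Sh :: "real^'l^'l" and Vh :: "real^'l^'n"
  assumes "orth_cols U" "orth_cols V" "nonneg_diag S" "X = U ** S ** transpose V"
    and "orth_cols Uh" "orth_cols Vh" "nonneg_diag Sh" "Xh = Uh ** Sh ** transpose Vh"
    and "spec_norm X < 1" "spec_norm Xh < 1"
    and "(spec_norm X)\<^sup>2 + 2 * spec_norm (Xh - X) < 1"
  shows "spec_norm (U ** S ** matrix_inv (mat 1 - S ** S) ** transpose V
                    - Uh ** Sh ** matrix_inv (mat 1 - Sh ** Sh) ** transpose Vh)
         \<le> 3 * spec_norm (X - Xh) / (1 - (spec_norm X)\<^sup>2 - 2 * spec_norm (Xh - X))\<^sup>2"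
  using spec_norm_gram_resolvent_diff[OF assms(11)]
  by (simp add: svd_matrix_inv_eq[OF assms(1-4,9)] svd_matrix_inv_eq[OF assms(5-8,10)])

end
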